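(* Let $V$ be a Whittaker module of type $\eta$ over $R$ with cyclic Whittaker vector $w$, and suppose $Z_V=(p(\Omega)^n)$ where $p$ is an irreducible polynomial and $n\ge1$. Then $V$ has a unique maximal submodule, namely $V_1=Rp(\Omega)w$.
   Context: Let $f\in\mathbb{C}[H]$ be a polynomial. $R=R(f)$ is the associative $\mathbb{C}$-algebra generated by $E,F,H$ with relations $EF-FE=f(H)$, $HE-EH=E$, $HF-FH=-F$. Let $u\in\mathbb{C}[H]$ satisfy $f(H)=\tfrac12(u(H+1)-u(H))$ and $\Omega=2FE+u(H+1)$; the center $Z(R)$ is the polynomial ring $\mathbb{C}[\Omega]$. Let $R(E)=\mathbb{C}[E]$ and fix an algebra homomorphism $\eta:R(E)\to\mathbb{C}$ with $\eta(E)\neq0$. A vector $v$ of an $R$-module $V$ is a Whittaker vector of type $\eta$ if $Ev=\eta(E)v$; $V$ is a Whittaker module of type $\eta$ with cyclic Whittaker vector $w$ if $w$ is a Whittaker vector and $V=Rw$. $Z_V=\mathrm{Ann}_R(V)\cap Z(R)$. *)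

theory Defs
  imports Complex_Main "HOL-Computational_Algebra.Polynomial"
begin

text \<open>An R(f)-module is modelled as a complex vector space (carrier type 'v with
  scalar multiplication sc) together with three linear operators E, F, H satisfying
  the defining relations of R(f).\<close>

definition op_poly :: "(complex \<Rightarrow> 'v::ab_group_add \<Rightarrow> 'v) \<Rightarrow> complex poly \<Rightarrow> ('v \<Rightarrow> 'v) \<Rightarrow> 'v \<Rightarrow> 'v" where
  "op_poly sc q T v = (\<Sum>i\<le>degree q. sc (coeff q i) ((T ^^ i) v))"

definition R_module :: "(complex \<Rightarrow> 'v::ab_group_add \<Rightarrow> 'v) \<Rightarrow> complex poly
    \<Rightarrow> ('v \<Rightarrow> 'v) \<Rightarrow> ('v \<Rightarrow> 'v) \<Rightarrow> ('v \<Rightarrow> 'v) \<Rightarrow> bool" where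
  "R_module sc f E F H \<longleftrightarrow> vector_space sc
     \<and> Vector_Spaces.linear sc sc E \<and> Vector_Spaces.linear sc sc F \<and> Vector_Spaces.linear sc sc H
     \<and> (\<forall>v. E (F v) - F (E v) = op_poly sc f H v)
     \<and> (\<forall>v. H (E v) - E (H v) = E v)
     \<and> (\<forall>v. H (F v) - F (H v) = - F v)"

definition Omega_op :: "(complex \<Rightarrow> 'v::ab_group_add \<Rightarrow> 'v) \<Rightarrow> complex poly
    \<Rightarrow> ('v \<Rightarrow> 'v) \<Rightarrow> ('v \<Rightarrow> 'v) \<Rightarrow> ('v \<Rightarrow> 'v) \<Rightarrow> 'v \<Rightarrow> 'v" where
  "Omega_op sc u E F H v = sc 2 (F (E v)) + op_poly sc u (\<lambda>x. H x + x) v"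

definition submodule :: "(complex \<Rightarrow> 'v::ab_group_add \<Rightarrow> 'v)
    \<Rightarrow> ('v \<Rightarrow> 'v) \<Rightarrow> ('v \<Rightarrow> 'v) \<Rightarrow> ('v \<Rightarrow> 'v) \<Rightarrow> 'v set \<Rightarrow> bool" where
  "submodule sc E F H W \<longleftrightarrow> module.subspace sc W
     \<and> (\<forall>v\<in>W. E v \<in> W) \<and> (\<forall>v\<in>W. F v \<in> W) \<and> (\<forall>v\<in>W. H v \<in> W)"

definition gen_submodule :: "(complex \<Rightarrow> 'v::ab_group_add \<Rightarrow> 'v)
    \<Rightarrow> ('v \<Rightarrow> 'v) \<Rightarrow> ('v \<Rightarrow> 'v) \<Rightarrow> ('v \<Rightarrow> 'v) \<Rightarrow> 'v set \<Rightarrow> 'v set" where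
  "gen_submodule sc E F H S = \<Inter>{W. submodule sc E F H W \<and> S \<subseteq> W}"

definition maximal_submodule :: "(complex \<Rightarrow> 'v::ab_group_add \<Rightarrow> 'v)
    \<Rightarrow> ('v \<Rightarrow> 'v) \<Rightarrow> ('v \<Rightarrow> 'v) \<Rightarrow> ('v \<Rightarrow> 'v) \<Rightarrow> 'v set \<Rightarrow> bool" where
  "maximal_submodule sc E F H W \<longleftrightarrow> submodule sc E F H W \<and> W \<noteq> UNIV
     \<and> (\<forall>W'. submodule sc E F H W' \<and> W \<subseteq> W' \<longrightarrow> W' = W \<or> W' = UNIV)"

text \<open>Whittaker module of type \<eta> (with \<eta>(E) = c) and cyclic Whittaker vector w.\<close>
definition whittaker_module :: "(complex \<Rightarrow> 'v::ab_group_add \<Rightarrow> 'v)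
    \<Rightarrow> ('v \<Rightarrow> 'v) \<Rightarrow> ('v \<Rightarrow> 'v) \<Rightarrow> ('v \<Rightarrow> 'v) \<Rightarrow> complex \<Rightarrow> 'v \<Rightarrow> bool" where
  "whittaker_module sc E F H c w \<longleftrightarrow> E w = sc c w \<and> gen_submodule sc E F H {w} = UNIV"

text \<open>Z_V = Ann_R(V) \<inter> Z(R), with Z(R) = C[\<Omega>]: polynomials q with q(\<Omega>) acting as 0.\<close>
definition Z_V :: "(complex \<Rightarrow> 'v::ab_group_add \<Rightarrow> 'v) \<Rightarrow> complex poly
    \<Rightarrow> ('v \<Rightarrow> 'v) \<Rightarrow> ('v \<Rightarrow> 'v) \<Rightarrow> ('v \<Rightarrow> 'v) \<Rightarrow> complex poly set" where
  "Z_V sc u E F H = {q. \<forall>v. op_poly sc q (Omega_op sc u E F H) v = 0}"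

end

theory Submission
  imports Defs "HOL-Computational_Algebra.Fundamental_Theorem_Algebra" "HOL-Library.Set_Algebras"
begin

text \<open>An irreducible complex polynomial is linear, \<open>p = r (X - z)\<close>, so \<open>T = p(\<Omega>)\<close> has the same
  image \<open>U = (\<Omega> - z) V\<close> as \<open>\<Omega> - z\<close>. As \<open>\<Omega>\<close> is central, \<open>U\<close> is a submodule, and \<open>T\<^sup>n = 0\<close> on
  \<open>V \<noteq> 0\<close> forces \<open>U \<noteq> V\<close>. Modulo \<open>U\<close> the Casimir acts by \<open>z\<close>, so \<open>\<Omega> w = 2c F w + u(H+1) w\<close>
  expresses \<open>F w\<close> as a polynomial in \<open>H\<close> applied to \<open>w\<close>; hence \<open>V = {g(H) w} + U\<close>.
  Since \<open>E g(H) w = c g(H-1) w\<close>, the polynomials \<open>g\<close> with \<open>g(H) w\<close> in a submodule \<open>S \<supset> U\<close> are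
  closed under finite differences, so \<open>S\<close> contains a nonzero multiple of \<open>w\<close>: \<open>V/U\<close> is simple.
  Finally a proper submodule \<open>W \<not>\<subseteq> U\<close> would give \<open>W + U = V\<close>, hence \<open>V = W + T\<^sup>k V\<close> for all \<open>k\<close>,
  and \<open>T\<^sup>n = 0\<close> yields \<open>W = V\<close>.\<close>

section \<open>Irreducible complex polynomials and finite differences\<close>

lemma irreducible_complex_poly_linear:
  fixes p :: "complex poly"
  assumes "irreducible p"
  obtains z r where "r \<noteq> 0" and "p = smult r [:-z, 1:]"
proof -
  have "p \<noteq> 0" "\<not> is_unit p"
    using assms by (auto simp: irreducible_def)
  then have "\<not> constant (poly p)"
    by (simp add: constant_degree is_unit_iff_degree)
  then obtain z where "poly p z = 0"
    using fundamental_theorem_of_algebra by blast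
  then obtain q where pq: "p = [:-z, 1:] * q"
    by (auto simp: poly_eq_0_iff_dvd elim: dvdE)
  have "\<not> is_unit [:-z, 1:]"
    by (simp add: is_unit_iff_degree)
  then have "is_unit q"
    using irreducibleD[OF assms pq] by blast
  then obtain r where "q = [:r:]" "r dvd 1"
    by (rule is_unit_polyE)
  moreover from \<open>r dvd 1\<close> have "r \<noteq> 0"
    by auto
  ultimately show ?thesis
    using pq that[of r z] by (simp add: mult.commute)
qed

lemma pcompose_shift_eq_imp_degree_0:
  fixes g :: "'a::{idom,ring_char_0} poly"
  assumes "pcompose g [:-1, 1:] = g"
  shows "degree g = 0"
proof -
  have "poly g (- of_nat k) = poly g 0" for k
  proof (induction k)
    case (Suc k)
    have "poly g (- of_nat (Suc k)) = poly (pcompose g [:-1, 1:]) (- of_nat k)"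
      by (simp add: poly_pcompose algebra_simps)
    with Suc assms show ?case
      by simp
  qed simp
  then have "range (\<lambda>k. - of_nat k) \<subseteq> {x. poly (g - [:poly g 0:]) x = 0}"
    by auto
  moreover have "infinite (range (\<lambda>k::nat. - of_nat k :: 'a))"
    by (rule range_inj_infinite) (auto simp: inj_def)
  ultimately have "g - [:poly g 0:] = 0"
    using poly_roots_finite finite_subset by blast
  then show ?thesis
    by (metis degree_pCons_0 eq_iff_diff_eq_0)
qed

lemma degree_shift_diff_less:
  fixes g :: "'a::{idom,ring_char_0} poly"
  assumes "degree g > 0"
  shows "degree (pcompose g [:-1, 1:] - g) < degree g"
proof -
  have deg: "degree (pcompose g [:-1, 1:]) = degree g"
    by (simp add: degree_pcompose)
  have lead: "coeff (pcompose g [:-1, 1:]) (degree g) = lead_coeff g"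
    using lead_coeff_comp[of "[:-1, 1:]" g] deg by simp
  have "coeff (pcompose g [:-1, 1:] - g) i = 0" if "i \<ge> degree g" for i
  proof (cases "i = degree g")
    case False
    with that deg show ?thesis
      by (simp add: coeff_eq_0)
  qed (simp add: lead)
  then have "degree (pcompose g [:-1, 1:] - g) \<le> degree g - 1"
    using assms by (intro degree_le) auto
  with assms show ?thesis
    by simp
qed

lemma shift_closed_set_contains_nonzero_const:
  fixes J :: "'a::{idom,ring_char_0} poly set"
  assumes diff_closed: "\<And>p q. p \<in> J \<Longrightarrow> q \<in> J \<Longrightarrow> p - q \<in> J"
    and shift_closed: "\<And>p. p \<in> J \<Longrightarrow> pcompose p [:-1, 1:] \<in> J"
    and "g \<in> J" "g \<noteq> 0"
  obtains a where "a \<noteq> 0" and "[:a:] \<in> J"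
  using \<open>g \<in> J\<close> \<open>g \<noteq> 0\<close>
proof (induction "degree g" arbitrary: g rule: less_induct)
  case less
  show ?case
  proof (cases "degree g = 0")
    case True
    with less show ?thesis
      by (metis degree_eq_zeroE pCons_eq_0_iff)
  next
    case False
    let ?h = "pcompose g [:-1, 1:] - g"
    have "?h \<in> J"
      using less.prems diff_closed shift_closed by blast
    moreover have "?h \<noteq> 0"
      using pcompose_shift_eq_imp_degree_0[of g] False by auto
    moreover have "degree ?h < degree g"
      using degree_shift_diff_less[of g] False by simp
    ultimately show ?thesis
      using less by blast
  qed
qed

section \<open>Polynomials in a linear operator\<close>

locale complex_vector_space = vector_space sc for sc :: "complex \<Rightarrow> 'v::ab_group_add \<Rightarrow> 'v"
begin

sublocale vector_space_pair sc sc
  by unfold_locales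

lemma op_poly_eq_sum_atMost:
  assumes "degree q \<le> N"
  shows "op_poly sc q T v = (\<Sum>i\<le>N. sc (coeff q i) ((T ^^ i) v))"
  unfolding op_poly_def
  by (rule sum.mono_neutral_left) (use assms in \<open>auto simp: coeff_eq_0\<close>)

lemma op_poly_0 [simp]: "op_poly sc 0 T v = 0"
  by (simp add: op_poly_def)

lemma op_poly_const [simp]: "op_poly sc [:a:] T v = sc a v"
  by (simp add: op_poly_def)

lemma op_poly_1 [simp]: "op_poly sc 1 T v = v"
  using op_poly_const[of 1] by (simp add: one_pCons)

lemma op_poly_linear_poly: "op_poly sc [:a, b:] T = (\<lambda>v. sc a v + sc b (T v))"
  by (rule ext) (simp add: op_poly_def)

lemma op_poly_add: "op_poly sc (p + q) T v = op_poly sc p T v + op_poly sc q T v"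
proof -
  let ?N = "max (degree p) (degree q)"
  have "degree (p + q) \<le> ?N"
    by (rule degree_add_le) auto
  then show ?thesis
    by (simp add: op_poly_eq_sum_atMost[of _ ?N] sum.distrib[symmetric] scale_left_distrib)
qed

lemma op_poly_smult: "op_poly sc (smult a p) T v = sc a (op_poly sc p T v)"
  by (simp add: op_poly_eq_sum_atMost[of _ "degree p"] scale_sum_right)

lemma op_poly_diff: "op_poly sc (p - q) T v = op_poly sc p T v - op_poly sc q T v"
  using op_poly_add[of p "-q"] op_poly_smult[of "-1" q] by simp

lemma subspace_range_op_poly: "subspace (range (\<lambda>g. op_poly sc g T w))"
  unfolding subspace_def
proof (intro conjI ballI allI)
  show "0 \<in> range (\<lambda>g. op_poly sc g T w)"
    using rangeI[of "\<lambda>g. op_poly sc g T w" 0] by simp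
  fix x y
  assume "x \<in> range (\<lambda>g. op_poly sc g T w)" "y \<in> range (\<lambda>g. op_poly sc g T w)"
  then obtain g h where "x = op_poly sc g T w" "y = op_poly sc h T w"
    by blast
  then show "x + y \<in> range (\<lambda>g. op_poly sc g T w)"
    using rangeI[of "\<lambda>g. op_poly sc g T w" "g + h"] by (simp add: op_poly_add)
next
  fix a x
  assume "x \<in> range (\<lambda>g. op_poly sc g T w)"
  then obtain g where "x = op_poly sc g T w"
    by blast
  then show "sc a x \<in> range (\<lambda>g. op_poly sc g T w)"
    using rangeI[of "\<lambda>g. op_poly sc g T w" "smult a g"] by (simp add: op_poly_smult)
qed

lemma op_poly_pCons:
  assumes "Vector_Spaces.linear sc sc T"
  shows "op_poly sc (pCons a q) T v = sc a v + T (op_poly sc q T v)"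
proof -
  have "op_poly sc (pCons a q) T v = (\<Sum>i\<le>Suc (degree q). sc (coeff (pCons a q) i) ((T ^^ i) v))"
    by (rule op_poly_eq_sum_atMost) simp
  also have "\<dots> = sc a v + (\<Sum>i\<le>degree q. sc (coeff q i) ((T ^^ Suc i) v))"
    by (subst sum.atMost_Suc_shift) simp
  also have "(\<Sum>i\<le>degree q. sc (coeff q i) ((T ^^ Suc i) v)) = T (op_poly sc q T v)"
    by (simp add: op_poly_def linear_sum[OF assms] linear_scale[OF assms])
  finally show ?thesis .
qed

lemma linear_op_poly:
  assumes "Vector_Spaces.linear sc sc T"
  shows "Vector_Spaces.linear sc sc (op_poly sc q T)"
proof (induction q)
  case 0
  show ?case
    using linear_zero by simp
next
  case (pCons a q)
  have "Vector_Spaces.linear sc sc (\<lambda>v. sc a v + T (op_poly sc q T v))"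
    using Vector_Spaces.linear_compose[OF pCons.IH assms]
    by (intro linear_compose_add linear_scale_self) (simp add: o_def)
  then show ?case
    by (simp add: op_poly_pCons[OF assms])
qed

lemma linear_plus_id:
  "Vector_Spaces.linear sc sc T \<Longrightarrow> Vector_Spaces.linear sc sc (\<lambda>y. T y + y)"
  by (intro linear_compose_add linear_ident)

lemma op_poly_mult:
  assumes "Vector_Spaces.linear sc sc T"
  shows "op_poly sc (p * q) T v = op_poly sc p T (op_poly sc q T v)"
proof (induction p arbitrary: v)
  case (pCons a p)
  have "pCons a p * q = smult a q + pCons 0 (p * q)"
    by simp
  with pCons show ?case
    by (simp add: op_poly_add op_poly_smult op_poly_pCons[OF assms])
qed simp

lemma op_poly_power:
  assumes "Vector_Spaces.linear sc sc T"
  shows "op_poly sc (p ^ n) T v = (op_poly sc p T ^^ n) v"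
  by (induction n arbitrary: v) (simp_all add: op_poly_mult[OF assms])

lemma op_poly_pcompose:
  assumes "Vector_Spaces.linear sc sc T"
  shows "op_poly sc (pcompose g q) T v = op_poly sc g (op_poly sc q T) v"
proof (induction g arbitrary: v)
  case (pCons a g)
  then show ?case
    by (simp add: pcompose_pCons op_poly_add op_poly_mult[OF assms]
        op_poly_pCons[OF linear_op_poly[OF assms]])
qed simp

lemma op_poly_pcompose_shift:
  assumes "Vector_Spaces.linear sc sc T"
  shows "op_poly sc (pcompose g [:a, 1:]) T v = op_poly sc g (\<lambda>y. T y + sc a y) v"
  by (simp add: op_poly_pcompose[OF assms] op_poly_linear_poly add.commute)

lemma op_poly_intertwine:
  assumes "Vector_Spaces.linear sc sc A" "Vector_Spaces.linear sc sc B"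
    and "Vector_Spaces.linear sc sc C" "\<And>v. A (B v) = C (A v)"
  shows "A (op_poly sc q B v) = op_poly sc q C (A v)"
proof (induction q arbitrary: v)
  case 0
  show ?case
    using linear_0[OF assms(1)] by simp
next
  case (pCons a q)
  then show ?case
    using assms by (simp add: op_poly_pCons linear_add linear_scale)
qed

lemma op_poly_in_subspace:
  assumes "subspace S" "\<And>x. x \<in> S \<Longrightarrow> T x \<in> S" "Vector_Spaces.linear sc sc T" "v \<in> S"
  shows "op_poly sc q T v \<in> S"
proof (induction q)
  case 0
  show ?case
    using subspace_0[OF assms(1)] by simp
next
  case (pCons a q)
  then show ?case
    using assms by (simp add: op_poly_pCons subspace_add subspace_scale)
qed

lemma range_op_poly_smult:
  assumes "Vector_Spaces.linear sc sc T" "a \<noteq> 0"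
  shows "range (op_poly sc (smult a q) T) = range (op_poly sc q T)"
proof -
  have "op_poly sc (smult a q) T = op_poly sc q T \<circ> sc a"
    by (auto simp: op_poly_smult linear_scale[OF linear_op_poly[OF assms(1)]])
  moreover have "surj (sc a)"
    using assms(2) by (metis surjI scale_scale right_inverse scale_one)
  ultimately show ?thesis
    by (metis image_comp)
qed

section \<open>A nilpotent Nakayama lemma\<close>

lemma subspace_set_plus:
  assumes "subspace A" "subspace B"
  shows "subspace (A + B)"
proof -
  have "A + B = {x + y |x y. x \<in> A \<and> y \<in> B}"
    unfolding set_plus_def by blast
  then show ?thesis
    using subspace_sums[OF assms] by simp
qed

lemma range_nilpotent_neq_UNIV:
  fixes T :: "'v \<Rightarrow> 'v"
  assumes "\<And>v. (T ^^ n) v = 0" and "\<exists>v::'v. v \<noteq> 0"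
  shows "range T \<noteq> UNIV"
proof
  assume "range T = UNIV"
  then have "surj (T ^^ n)"
    by (rule Nat.surj_fn)
  moreover obtain v :: 'v where "v \<noteq> 0"
    using assms(2) by blast
  ultimately obtain x where "v = (T ^^ n) x"
    by (metis surjD)
  with assms(1) \<open>v \<noteq> 0\<close> show False
    by simp
qed

lemma subspace_eq_UNIV_if_plus_range_nilpotent:
  assumes W: "subspace W" "\<And>x. x \<in> W \<Longrightarrow> T x \<in> W"
    and T: "Vector_Spaces.linear sc sc T" "\<And>v. (T ^^ n) v = 0"
    and cover: "W + range T = UNIV"
  shows "W = UNIV"
proof -
  have reach: "v \<in> W + range (T ^^ k)" for k v
  proof (induction k arbitrary: v)
    case 0
    show ?case
      using subspace_0[OF W(1)] set_plus_intro[of 0 W v] by simp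
  next
    case (Suc k)
    have "v \<in> W + range T"
      using cover by simp
    then obtain x y where xy: "v = x + T y" "x \<in> W"
      by (auto elim!: set_plus_elim)
    obtain x' y' where xy': "y = x' + (T ^^ k) y'" "x' \<in> W"
      using Suc.IH[of y] by (auto elim!: set_plus_elim)
    have "v = (x + T x') + (T ^^ Suc k) y'"
      using xy xy' by (simp add: linear_add[OF T(1)] add.assoc)
    moreover have "x + T x' \<in> W"
      using W xy xy' subspace_add by blast
    ultimately show ?case
      by auto
  qed
  have "v \<in> W" for v
  proof -
    obtain x y where "v = x + (T ^^ n) y" "x \<in> W"
      using reach[of v n] by (auto elim!: set_plus_elim)
    with T(2) show ?thesis
      by simp
  qed
  then show ?thesis
    by blast
qed

end

locale operator_triple = complex_vector_space sc for sc :: "complex \<Rightarrow> 'v::ab_group_add \<Rightarrow> 'v" +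
  fixes E F H :: "'v \<Rightarrow> 'v"
  assumes linear_E: "Vector_Spaces.linear sc sc E"
    and linear_F: "Vector_Spaces.linear sc sc F"
    and linear_H: "Vector_Spaces.linear sc sc H"
begin

definition module_endo :: "('v \<Rightarrow> 'v) \<Rightarrow> bool" where
  "module_endo T \<longleftrightarrow> Vector_Spaces.linear sc sc T
     \<and> (\<forall>v. T (E v) = E (T v)) \<and> (\<forall>v. T (F v) = F (T v)) \<and> (\<forall>v. T (H v) = H (T v))"

lemma module_endo_op_poly:
  assumes "module_endo T"
  shows "module_endo (op_poly sc q T)"
proof -
  have T: "Vector_Spaces.linear sc sc T"
    using assms by (simp add: module_endo_def)
  have "K (op_poly sc q T v) = op_poly sc q T (K v)"
    if "Vector_Spaces.linear sc sc K" "\<And>v. T (K v) = K (T v)" for K v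
    using op_poly_intertwine[OF that(1) T T] that(2) by metis
  with assms linear_E linear_F linear_H show ?thesis
    by (simp add: module_endo_def linear_op_poly[OF T])
qed

lemma submodule_range:
  assumes "module_endo T"
  shows "submodule sc E F H (range T)"
proof -
  have "Vector_Spaces.linear sc sc T"
    using assms by (simp add: module_endo_def)
  then have "subspace (range T)"
    by (rule linear_subspace_image) simp
  moreover have "K (T v) \<in> range T" if "\<forall>v. T (K v) = K (T v)" for K v
    using that by (metis rangeI)
  ultimately show ?thesis
    using assms unfolding submodule_def module_endo_def by blast
qed

lemma submodule_vimage:
  assumes "module_endo T" "submodule sc E F H S"
  shows "submodule sc E F H (T -` S)"
proof -
  have "Vector_Spaces.linear sc sc T"
    using assms by (simp add: module_endo_def)
  then have "subspace (T -` S)"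
    by (rule linear_subspace_vimage) (use assms(2) in \<open>simp add: submodule_def\<close>)
  with assms show ?thesis
    unfolding submodule_def module_endo_def by simp
qed

lemma gen_submodule_image:
  assumes "module_endo T" and generated: "gen_submodule sc E F H {w} = UNIV"
  shows "gen_submodule sc E F H {T w} = range T"
proof
  show "gen_submodule sc E F H {T w} \<subseteq> range T"
    unfolding gen_submodule_def using submodule_range[OF assms(1)] by blast
next
  show "range T \<subseteq> gen_submodule sc E F H {T w}"
    unfolding gen_submodule_def
  proof (rule Inter_greatest)
    fix S
    assume "S \<in> {W. submodule sc E F H W \<and> {T w} \<subseteq> W}"
    then have "submodule sc E F H (T -` S)" "w \<in> T -` S"
      using submodule_vimage[OF assms(1)] by auto
    then have "T -` S = UNIV"
      using generated unfolding gen_submodule_def by blast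
    then show "range T \<subseteq> S"
      by blast
  qed
qed

lemma submodule_op_poly_H_plus_1:
  assumes "submodule sc E F H S" "x \<in> S"
  shows "op_poly sc g (\<lambda>y. H y + y) x \<in> S"
proof (rule op_poly_in_subspace[OF _ _ linear_plus_id[OF linear_H] assms(2)])
  show S: "subspace S"
    using assms(1) by (simp add: submodule_def)
  fix y
  assume "y \<in> S"
  moreover from this have "H y \<in> S"
    using assms(1) by (simp add: submodule_def)
  ultimately show "H y + y \<in> S"
    using subspace_add[OF S] by blast
qed

lemma submodule_set_plus:
  assumes P: "subspace P" and U: "submodule sc E F H U"
    and "\<And>x. x \<in> P \<Longrightarrow> E x \<in> P + U" "\<And>x. x \<in> P \<Longrightarrow> F x \<in> P + U"
      "\<And>x. x \<in> P \<Longrightarrow> H x \<in> P + U"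
  shows "submodule sc E F H (P + U)"
proof -
  have subspace_U: "subspace U"
    using U by (simp add: submodule_def)
  have stable: "K a \<in> P + U"
    if K: "Vector_Spaces.linear sc sc K" "\<And>x. x \<in> P \<Longrightarrow> K x \<in> P + U" "\<And>y. y \<in> U \<Longrightarrow> K y \<in> U"
      and "a \<in> P + U" for K a
  proof -
    obtain x y where "a = x + y" "x \<in> P" "y \<in> U"
      using \<open>a \<in> P + U\<close> by (rule set_plus_elim)
    moreover obtain x' y' where "K x = x' + y'" "x' \<in> P" "y' \<in> U"
      using K(2) \<open>x \<in> P\<close> by (metis set_plus_elim)
    ultimately have "K a = x' + (y' + K y)" "y' + K y \<in> U"
      using linear_add[OF K(1)] K(3) subspace_add[OF subspace_U] by (simp_all add: add.assoc)
    with \<open>x' \<in> P\<close> show ?thesis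
      by auto
  qed
  have "\<forall>y\<in>U. E y \<in> U" "\<forall>y\<in>U. F y \<in> U" "\<forall>y\<in>U. H y \<in> U"
    using U by (simp_all add: submodule_def)
  then show ?thesis
    unfolding submodule_def
    using subspace_set_plus[OF P subspace_U] stable[OF linear_E assms(3)]
      stable[OF linear_F assms(4)] stable[OF linear_H assms(5)]
    by blast
qed

lemma submodule_subset_range:
  assumes T: "module_endo T" "\<And>S x. submodule sc E F H S \<Longrightarrow> x \<in> S \<Longrightarrow> T x \<in> S"
      "\<And>v. (T ^^ n) v = 0"
    and simple: "\<And>S. submodule sc E F H S \<Longrightarrow> range T \<subset> S \<Longrightarrow> S = UNIV"
    and W: "submodule sc E F H W" "W \<noteq> UNIV"
  shows "W \<subseteq> range T"
proof -
  have subspace_W: "subspace W"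
    using W(1) by (simp add: submodule_def)
  have linear_T: "Vector_Spaces.linear sc sc T"
    using T(1) by (simp add: module_endo_def)
  have W_sub: "W \<subseteq> W + range T"
    using set_zero_plus2[of "range T" W] rangeI[of T 0]
    by (simp add: linear_0[OF linear_T] add.commute)
  have range_sub: "range T \<subseteq> W + range T"
    using set_zero_plus2[OF subspace_0[OF subspace_W]] .
  have "submodule sc E F H (W + range T)"
    using W(1) W_sub submodule_range[OF T(1)] subspace_W
    by (intro submodule_set_plus) (auto simp: submodule_def)
  then have "W + range T = range T \<or> W + range T = UNIV"
    using simple range_sub by blast
  moreover have "W + range T \<noteq> UNIV"
  proof
    assume "W + range T = UNIV"
    then have "W = UNIV"
      using subspace_eq_UNIV_if_plus_range_nilpotent[where W = W and T = T and n = n]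
        subspace_W T(2)[OF W(1)] linear_T T(3) by blast
    with W(2) show False ..
  qed
  ultimately show ?thesis
    using W_sub by blast
qed

lemma maximal_submodule_iff_eq_range:
  assumes T: "module_endo T" "\<And>S x. submodule sc E F H S \<Longrightarrow> x \<in> S \<Longrightarrow> T x \<in> S"
      "\<And>v. (T ^^ n) v = 0"
    and nontrivial: "\<exists>v::'v. v \<noteq> 0"
    and simple: "\<And>S. submodule sc E F H S \<Longrightarrow> range T \<subset> S \<Longrightarrow> S = UNIV"
  shows "maximal_submodule sc E F H W \<longleftrightarrow> W = range T"
proof -
  have proper: "range T \<noteq> UNIV"
    using range_nilpotent_neq_UNIV[OF T(3) nontrivial] .
  have "maximal_submodule sc E F H (range T)"
    unfolding maximal_submodule_def
    using submodule_range[OF T(1)] proper simple by blast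
  moreover have "W = range T" if "maximal_submodule sc E F H W"
    using that submodule_subset_range[OF T simple] submodule_range[OF T(1)] proper
    unfolding maximal_submodule_def by blast
  ultimately show ?thesis
    by blast
qed

end

section \<open>Centrality of the Casimir element\<close>

locale casimir_module =
  fixes sc :: "complex \<Rightarrow> 'v::ab_group_add \<Rightarrow> 'v" and f u :: "complex poly"
    and E F H :: "'v \<Rightarrow> 'v"
  assumes R_module: "R_module sc f E F H"
    and f_eq: "f = smult (1/2) (pcompose u [:1, 1:] - u)"
begin

sublocale operator_triple sc E F H
  using R_module
  unfolding R_module_def operator_triple_def operator_triple_axioms_def complex_vector_space_def
  by blast

abbreviation \<Omega> :: "'v \<Rightarrow> 'v" where
  "\<Omega> \<equiv> Omega_op sc u E F H"

lemma E_F: "E (F v) = F (E v) + op_poly sc f H v"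
  using R_module by (simp add: R_module_def algebra_simps)

lemma H_E: "H (E v) = E (H v) + E v"
  using R_module by (simp add: R_module_def algebra_simps)

lemma H_F: "H (F v) = F (H v) - F v"
  using R_module by (simp add: R_module_def algebra_simps)

lemma twice_op_poly_f:
  assumes "Vector_Spaces.linear sc sc K"
  shows "sc 2 (op_poly sc f K x) + op_poly sc u K x = op_poly sc u (\<lambda>y. K y + y) x"
proof -
  have "op_poly sc f K x = sc (1/2) (op_poly sc u (\<lambda>y. K y + y) x - op_poly sc u K x)"
    by (simp add: f_eq op_poly_smult op_poly_diff op_poly_pcompose_shift[OF assms])
  then have "sc 2 (op_poly sc f K x) = op_poly sc u (\<lambda>y. K y + y) x - op_poly sc u K x"
    by simp
  then show ?thesis
    by (simp add: eq_diff_eq)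
qed

lemma E_op_poly_H_plus_1: "E (op_poly sc g (\<lambda>y. H y + y) v) = op_poly sc g H (E v)"
  using op_poly_intertwine[OF linear_E linear_plus_id[OF linear_H] linear_H]
  by (simp add: H_E linear_add[OF linear_E])

lemma F_op_poly_H: "F (op_poly sc g H v) = op_poly sc g (\<lambda>y. H y + y) (F v)"
  using op_poly_intertwine[OF linear_F linear_H linear_plus_id[OF linear_H]]
  by (simp add: H_F)

lemma F_op_poly_H_plus_1:
  "F (op_poly sc g (\<lambda>y. H y + y) v) = op_poly sc g (\<lambda>y. (H y + y) + y) (F v)"
  using op_poly_intertwine[OF linear_F linear_plus_id[OF linear_H]
      linear_plus_id[OF linear_plus_id[OF linear_H]]]
  by (simp add: H_F linear_add[OF linear_F])

lemma H_op_poly_H_plus_1: "H (op_poly sc g (\<lambda>y. H y + y) v) = op_poly sc g (\<lambda>y. H y + y) (H v)"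
  using op_poly_intertwine[OF linear_H linear_plus_id[OF linear_H] linear_plus_id[OF linear_H]]
  by (simp add: linear_add[OF linear_H])

lemma Omega_E: "\<Omega> (E v) = E (\<Omega> v)"
proof -
  have "E (\<Omega> v) = sc 2 (E (F (E v))) + op_poly sc u H (E v)"
    by (simp add: Omega_op_def linear_add[OF linear_E] linear_scale[OF linear_E] E_op_poly_H_plus_1)
  also have "\<dots> = sc 2 (F (E (E v))) + (sc 2 (op_poly sc f H (E v)) + op_poly sc u H (E v))"
    by (simp add: E_F scale_right_distrib add.assoc)
  also have "\<dots> = \<Omega> (E v)"
    by (simp add: twice_op_poly_f[OF linear_H] Omega_op_def)
  finally show ?thesis ..
qed

lemma Omega_F: "\<Omega> (F v) = F (\<Omega> v)"
proof -
  have "F (\<Omega> v) = sc 2 (F (F (E v))) + op_poly sc u (\<lambda>y. (H y + y) + y) (F v)"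
    by (simp add: Omega_op_def linear_add[OF linear_F] linear_scale[OF linear_F] F_op_poly_H_plus_1)
  also have "\<dots> = sc 2 (F (F (E v)))
      + (sc 2 (op_poly sc f (\<lambda>y. H y + y) (F v)) + op_poly sc u (\<lambda>y. H y + y) (F v))"
    by (simp add: twice_op_poly_f[OF linear_plus_id[OF linear_H]])
  also have "\<dots> = \<Omega> (F v)"
    by (simp add: Omega_op_def E_F linear_add[OF linear_F] F_op_poly_H scale_right_distrib add.assoc)
  finally show ?thesis ..
qed

lemma Omega_H: "\<Omega> (H v) = H (\<Omega> v)"
proof -
  have "H (F (E v)) = F (E (H v))"
    by (simp add: H_F H_E linear_add[OF linear_F])
  then show ?thesis
    by (simp add: Omega_op_def linear_add[OF linear_H] linear_scale[OF linear_H] H_op_poly_H_plus_1)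
qed

lemma module_endo_Omega: "module_endo \<Omega>"
proof -
  have "Vector_Spaces.linear sc sc (\<lambda>v. sc 2 (F (E v)))"
    using Vector_Spaces.linear_compose[OF linear_E linear_F]
    by (intro linear_compose_scale_right) (simp add: o_def)
  then have "Vector_Spaces.linear sc sc \<Omega>"
    unfolding Omega_op_def
    by (intro linear_compose_add linear_op_poly linear_plus_id linear_H)
  then show ?thesis
    by (simp add: module_endo_def Omega_E Omega_F Omega_H)
qed

lemma submodule_op_poly_Omega:
  assumes "submodule sc E F H S" "x \<in> S"
  shows "op_poly sc q \<Omega> x \<in> S"
proof -
  have S: "subspace S"
    using assms(1) by (simp add: submodule_def)
  have "\<Omega> y \<in> S" if "y \<in> S" for y
    using assms(1) that S submodule_op_poly_H_plus_1[OF assms(1) that, of u]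
    unfolding Omega_op_def submodule_def by (metis subspace_add subspace_scale)
  then show ?thesis
    using op_poly_in_subspace[OF S] module_endo_Omega assms(2) by (simp add: module_endo_def)
qed

end

section \<open>Whittaker modules\<close>

locale whittaker_setting = casimir_module sc f u E F H
  for sc :: "complex \<Rightarrow> 'v::ab_group_add \<Rightarrow> 'v" and f u E F H +
  fixes c :: complex and w :: 'v
  assumes c_nonzero: "c \<noteq> 0"
    and whittaker: "whittaker_module sc E F H c w"
begin

lemma E_w: "E w = sc c w"
  using whittaker by (simp add: whittaker_module_def)

lemma generated: "gen_submodule sc E F H {w} = UNIV"
  using whittaker by (simp add: whittaker_module_def)

lemma submodule_eq_UNIV_if_w:
  assumes "submodule sc E F H S" "w \<in> S"
  shows "S = UNIV"
  using generated assms unfolding gen_submodule_def by blast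

lemma E_op_poly_H_w: "E (op_poly sc g H w) = sc c (op_poly sc (pcompose g [:-1, 1:]) H w)"
proof -
  have linear_H_minus: "Vector_Spaces.linear sc sc (\<lambda>y. H y - y)"
    by (intro linear_compose_sub linear_H linear_ident)
  have "E (op_poly sc g H w) = op_poly sc g (\<lambda>y. H y - y) (E w)"
    using op_poly_intertwine[OF linear_E linear_H linear_H_minus] H_E by (simp add: algebra_simps)
  also have "\<dots> = sc c (op_poly sc (pcompose g [:-1, 1:]) H w)"
    by (simp add: E_w linear_scale[OF linear_op_poly[OF linear_H_minus]]
        op_poly_pcompose_shift[OF linear_H])
  finally show ?thesis .
qed

abbreviation \<Omega>_minus_range :: "complex \<Rightarrow> 'v set" where
  "\<Omega>_minus_range z \<equiv> range (op_poly sc [:-z, 1:] \<Omega>)"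

lemma submodule_\<Omega>_minus_range: "submodule sc E F H (\<Omega>_minus_range z)"
  by (rule submodule_range[OF module_endo_op_poly[OF module_endo_Omega]])

lemma subspace_\<Omega>_minus_range: "subspace (\<Omega>_minus_range z)"
  using submodule_\<Omega>_minus_range by (simp add: submodule_def)

lemma F_w_mod_\<Omega>_minus_range:
  "F w - op_poly sc (smult (1 / (2 * c)) ([:z:] - pcompose u [:1, 1:])) H w \<in> \<Omega>_minus_range z"
proof -
  let ?G = "op_poly sc u (\<lambda>y. H y + y) w"
  have poly_H_w: "op_poly sc (smult (1 / (2 * c)) ([:z:] - pcompose u [:1, 1:])) H w
      = sc (z / (2 * c)) w - sc (1 / (2 * c)) ?G"
    by (simp add: op_poly_smult op_poly_diff op_poly_pcompose_shift[OF linear_H]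
        scale_right_diff_distrib)
  have "op_poly sc [:-z, 1:] \<Omega> w = sc (2 * c) (F w) + ?G - sc z w"
    by (simp add: op_poly_linear_poly Omega_op_def E_w linear_scale[OF linear_F])
  then have \<Omega>_w: "sc (1 / (2 * c)) (op_poly sc [:-z, 1:] \<Omega> w)
      = F w + sc (1 / (2 * c)) ?G - sc (z / (2 * c)) w"
    using c_nonzero by (simp add: scale_right_distrib scale_right_diff_distrib)
  have "F w - op_poly sc (smult (1 / (2 * c)) ([:z:] - pcompose u [:1, 1:])) H w
      = sc (1 / (2 * c)) (op_poly sc [:-z, 1:] \<Omega> w)"
    unfolding poly_H_w \<Omega>_w by (simp add: algebra_simps)
  then show ?thesis
    using subspace_scale[OF subspace_\<Omega>_minus_range] by (metis rangeI)
qed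

lemma F_op_poly_H_w_mod_\<Omega>_minus_range:
  "F (op_poly sc g H w) \<in> range (\<lambda>g. op_poly sc g H w) + \<Omega>_minus_range z"
proof -
  define r where "r = smult (1 / (2 * c)) ([:z:] - pcompose u [:1, 1:])"
  have "F (op_poly sc g H w) = op_poly sc g (\<lambda>y. H y + y) (op_poly sc r H w)
      + op_poly sc g (\<lambda>y. H y + y) (F w - op_poly sc r H w)"
    by (simp add: F_op_poly_H linear_diff[OF linear_op_poly[OF linear_plus_id[OF linear_H]]])
  also have "op_poly sc g (\<lambda>y. H y + y) (op_poly sc r H w) = op_poly sc (pcompose g [:1, 1:] * r) H w"
    by (simp add: op_poly_mult[OF linear_H] op_poly_pcompose_shift[OF linear_H])
  finally show ?thesis
    using submodule_op_poly_H_plus_1[OF submodule_\<Omega>_minus_range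
        F_w_mod_\<Omega>_minus_range[of z, folded r_def]]
    by (simp add: set_plus_intro)
qed

lemma op_poly_H_w_plus_\<Omega>_minus_range:
  "range (\<lambda>g. op_poly sc g H w) + \<Omega>_minus_range z = UNIV"
proof -
  let ?P = "range (\<lambda>g. op_poly sc g H w)" and ?U = "\<Omega>_minus_range z"
  have P_sub: "?P \<subseteq> ?P + ?U"
    using set_zero_plus2[OF subspace_0[OF subspace_\<Omega>_minus_range], of ?P] by (simp add: add.commute)
  have "E (op_poly sc g H w) \<in> ?P" for g
    using rangeI[of "\<lambda>g. op_poly sc g H w" "smult c (pcompose g [:-1, 1:])"]
    by (simp add: E_op_poly_H_w op_poly_smult)
  moreover have "H (op_poly sc g H w) \<in> ?P" for g
    using rangeI[of "\<lambda>g. op_poly sc g H w" "pCons 0 g"] by (simp add: op_poly_pCons[OF linear_H])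
  ultimately have "submodule sc E F H (?P + ?U)"
    using P_sub F_op_poly_H_w_mod_\<Omega>_minus_range
    by (intro submodule_set_plus subspace_range_op_poly submodule_\<Omega>_minus_range) blast+
  moreover have "w \<in> ?P + ?U"
    using P_sub rangeI[of "\<lambda>g. op_poly sc g H w" 1] by auto
  ultimately show ?thesis
    using submodule_eq_UNIV_if_w by simp
qed

lemma w_in_submodule_if_op_poly_H_w:
  assumes S: "submodule sc E F H S" and "op_poly sc g H w \<in> S" "g \<noteq> 0"
  shows "w \<in> S"
proof -
  have subspace_S: "subspace S"
    using S by (simp add: submodule_def)
  let ?J = "{q. op_poly sc q H w \<in> S}"
  have "p - q \<in> ?J" if "p \<in> ?J" "q \<in> ?J" for p q
    using that subspace_diff[OF subspace_S] by (simp add: op_poly_diff)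
  moreover have "pcompose q [:-1, 1:] \<in> ?J" if "q \<in> ?J" for q
  proof -
    have "E (op_poly sc q H w) \<in> S"
      using S that by (simp add: submodule_def)
    then have "sc (inverse c) (E (op_poly sc q H w)) \<in> S"
      by (rule subspace_scale[OF subspace_S])
    with c_nonzero show ?thesis
      by (simp add: E_op_poly_H_w)
  qed
  moreover have "g \<in> ?J"
    using assms(2) by simp
  ultimately obtain a where "a \<noteq> 0" "[:a:] \<in> ?J"
    using assms(3) by (rule shift_closed_set_contains_nonzero_const)
  then show "w \<in> S"
    using subspace_scale[OF subspace_S, of "sc a w" "inverse a"] by simp
qed

lemma submodule_eq_UNIV_if_psupset_\<Omega>_minus_range:
  assumes S: "submodule sc E F H S" and psupset: "\<Omega>_minus_range z \<subset> S"
  shows "S = UNIV"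
proof -
  let ?U = "\<Omega>_minus_range z"
  obtain v where v: "v \<in> S" "v \<notin> ?U"
    using psupset by blast
  have "v \<in> range (\<lambda>g. op_poly sc g H w) + ?U"
    using op_poly_H_w_plus_\<Omega>_minus_range by simp
  then obtain g y where gy: "v = op_poly sc g H w + y" "y \<in> ?U"
    by (auto elim!: set_plus_elim)
  have "y \<in> S"
    using gy(2) psupset by blast
  with S v(1) have "v - y \<in> S"
    by (simp add: submodule_def subspace_diff)
  then have "op_poly sc g H w \<in> S"
    using gy(1) by simp
  moreover have "g \<noteq> 0"
    using v(2) gy by (cases "g = 0") simp_all
  ultimately have "w \<in> S"
    by (rule w_in_submodule_if_op_poly_H_w[OF S])
  with S show ?thesis
    by (rule submodule_eq_UNIV_if_w)
qed

end

theorem mainTheorem12: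
  fixes sc :: "complex \<Rightarrow> 'v::ab_group_add \<Rightarrow> 'v"
    and f u p :: "complex poly" and E F H :: "'v \<Rightarrow> 'v" and c :: complex and w :: 'v and n :: nat
  assumes "R_module sc f E F H"
    and "f = smult (1/2) (pcompose u [:1, 1:] - u)"
    and "c \<noteq> 0"
    and "whittaker_module sc E F H c w"
    and "irreducible p" and "n \<ge> 1"
    and "Z_V sc u E F H = {q. p ^ n dvd q}"
  shows "\<forall>W. maximal_submodule sc E F H W \<longleftrightarrow>
           W = gen_submodule sc E F H {op_poly sc p (Omega_op sc u E F H) w}"
proof
  fix W
  interpret whittaker_setting sc f u E F H c w
    using assms(1-4) by unfold_locales
  obtain z r where "r \<noteq> 0" and p_linear: "p = smult r [:-z, 1:]"
    using irreducible_complex_poly_linear[OF assms(5)] .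
  let ?T = "op_poly sc p \<Omega>"
  have linear_\<Omega>: "Vector_Spaces.linear sc sc \<Omega>"
    using module_endo_Omega by (simp add: module_endo_def)
  have "p ^ n \<in> Z_V sc u E F H"
    using assms(7) by simp
  then have nilpotent: "(?T ^^ n) v = 0" for v
    by (simp add: Z_V_def op_poly_power[OF linear_\<Omega>])
  have "\<exists>v::'v. v \<noteq> 0"
  proof (rule ccontr)
    assume "\<not> (\<exists>v::'v. v \<noteq> 0)"
    then have "p ^ n dvd 1"
      using assms(7) by (auto simp: Z_V_def)
    with assms(5,6) show False
      by (simp add: is_unit_power_iff irreducible_def)
  qed
  moreover have "range ?T = \<Omega>_minus_range z"
    unfolding p_linear by (rule range_op_poly_smult[OF linear_\<Omega> \<open>r \<noteq> 0\<close>])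
  ultimately have "maximal_submodule sc E F H W \<longleftrightarrow> W = range ?T"
    using submodule_eq_UNIV_if_psupset_\<Omega>_minus_range nilpotent
    by (intro maximal_submodule_iff_eq_range module_endo_op_poly module_endo_Omega submodule_op_poly_Omega)
      simp_all
  then show "maximal_submodule sc E F H W \<longleftrightarrow> W = gen_submodule sc E F H {?T w}"
    using gen_submodule_image[OF module_endo_op_poly[OF module_endo_Omega] generated] by simp
qed

end
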